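(* Let $M\ge 2$ and let $0<\gamma_1<\gamma_2<\cdots<\gamma_M$ be real numbers. For $\mathbf{p}=(p_1,\dots,p_M)^T\in\mathbb{R}_{\ge 0}^M$ define $$R_{\mathrm{sum}}(\mathbf{p})=\sum_{i=1}^{M}\log_2\left[1+\frac{p_i\gamma_i}{\sum_{j=i+1}^{M}p_j\gamma_i+1}\right]$$ (an empty sum being $0$). Then $R_{\mathrm{sum}}$ is a strictly concave function of $\mathbf{p}$ on $\mathbb{R}_{\ge 0}^M$.
   Context: This is the sum-rate (over a unit-bandwidth resource block) of an $M$-user downlink power-domain NOMA cluster in which user $i$ has normalized channel power gain $\gamma_i$ (channel gain divided by noise power) and transmit power $p_i$, and successive interference cancellation is performed in ascending order of channel gains: user $i$ cancels the signals of users $1,\dots,i-1$ and treats the signals of users $i+1,\dots,M$ as interference. *)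

theory Defs
  imports "HOL-Analysis.Analysis"
begin

text \<open>Vectors in R^M are represented as functions nat => real, components indexed by {1..M};
  the nonnegative orthant additionally requires all components outside {1..M} to be zero,
  so that points of the orthant correspond bijectively to vectors in R^M.\<close>

definition nonneg_orthant :: "nat \<Rightarrow> (nat \<Rightarrow> real) set" where
  "nonneg_orthant M = {p. (\<forall>i\<in>{1..M}. 0 \<le> p i) \<and> (\<forall>i. i \<notin> {1..M} \<longrightarrow> p i = 0)}"

definition strictly_concave_on :: "(nat \<Rightarrow> real) set \<Rightarrow> ((nat \<Rightarrow> real) \<Rightarrow> real) \<Rightarrow> bool" where
  "strictly_concave_on S f \<longleftrightarrow>
     (\<forall>x\<in>S. \<forall>y\<in>S. \<forall>t::real. 0 \<le> t \<and> t \<le> 1 \<longrightarrow> (\<lambda>i. t * x i + (1 - t) * y i) \<in> S) \<and>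
     (\<forall>x\<in>S. \<forall>y\<in>S. x \<noteq> y \<longrightarrow> (\<forall>t::real. 0 < t \<and> t < 1 \<longrightarrow>
        f (\<lambda>i. t * x i + (1 - t) * y i) > t * f x + (1 - t) * f y))"

definition R_sum :: "nat \<Rightarrow> (nat \<Rightarrow> real) \<Rightarrow> (nat \<Rightarrow> real) \<Rightarrow> real" where
  "R_sum M \<gamma> p = (\<Sum>i = 1..M. log 2 (1 + p i * \<gamma> i / ((\<Sum>j = i + 1..M. p j * \<gamma> i) + 1)))"

end

theory Submission
  imports Defs
begin

text \<open>With the tail powers \<open>S\<^sub>i = p\<^sub>i + \<dots> + p\<^sub>M\<close> and \<open>\<gamma>\<^sub>0 = 0\<close>, the rate of user \<open>i\<close> is
  \<open>log\<^sub>2 (1 + \<gamma>\<^sub>i S\<^sub>i) - log\<^sub>2 (1 + \<gamma>\<^sub>i S\<^sub>i\<^sub>+\<^sub>1)\<close>; regrouping the telescoping sum by \<open>S\<^sub>i\<close> gives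
  \<open>R\<^sub>s\<^sub>u\<^sub>m = \<Sum>\<^sub>i log\<^sub>2 ((1 + \<gamma>\<^sub>i S\<^sub>i) / (1 + \<gamma>\<^sub>i\<^sub>-\<^sub>1 S\<^sub>i))\<close>.
  Since \<open>\<gamma>\<^sub>i\<^sub>-\<^sub>1 < \<gamma>\<^sub>i\<close>, each map \<open>s \<mapsto> (1 + a s) / (1 + b s)\<close> is concave and injective on \<open>s \<ge> 0\<close>,
  so its logarithm is strictly concave. Finally \<open>p \<mapsto> (S\<^sub>1, \<dots>, S\<^sub>M)\<close> is linear and injective,
  so distinct points differ in some \<open>S\<^sub>i\<close>, which makes the concavity inequality strict.\<close>

lemma ln_less_minus_one: "0 < x \<Longrightarrow> x \<noteq> 1 \<Longrightarrow> ln x < x - 1"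
  for x :: real
  using ln_le_minus_one ln_eq_minus_one by fastforce

lemma ln_strict_concave:
  fixes x y t :: real
  assumes "0 < x" "0 < y" "x \<noteq> y" "0 < t" "t < 1"
  shows "t * ln x + (1 - t) * ln y < ln (t * x + (1 - t) * y)"
proof -
  define m where "m = t * x + (1 - t) * y"
  have m: "0 < m"
    unfolding m_def using assms by (simp add: add_pos_pos)
  have "x \<noteq> m"
  proof
    assume "x = m"
    then have "(1 - t) * (x - y) = 0"
      unfolding m_def by (simp add: algebra_simps)
    with assms show False by simp
  qed
  \<comment> \<open>tangent line of \<open>ln\<close> at \<open>m\<close>, strict at \<open>x\<close>\<close>
  then have x_tangent: "ln x - ln m < x / m - 1"
    using ln_less_minus_one[of "x / m"] m assms by (simp add: ln_div)
  have y_tangent: "ln y - ln m \<le> y / m - 1"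
    using ln_le_minus_one[of "y / m"] m assms by (simp add: ln_div)
  have "t * (ln x - ln m) + (1 - t) * (ln y - ln m) < t * (x / m - 1) + (1 - t) * (y / m - 1)"
    using mult_strict_left_mono[OF x_tangent, of t] mult_left_mono[OF y_tangent, of "1 - t"] assms
    by linarith
  also have "\<dots> = 0"
    using m unfolding m_def by (simp add: field_simps)
  finally show ?thesis
    unfolding m_def[symmetric] by (simp add: algebra_simps)
qed

lemma log_strict_concave:
  fixes B x y t :: real
  assumes "1 < B" "0 < x" "0 < y" "x \<noteq> y" "0 < t" "t < 1"
  shows "t * log B x + (1 - t) * log B y < log B (t * x + (1 - t) * y)"
proof -
  have "(t * ln x + (1 - t) * ln y) / ln B < ln (t * x + (1 - t) * y) / ln B"
    using ln_strict_concave[OF assms(2-6)] assms(1) by (simp add: divide_strict_right_mono)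
  then show ?thesis
    unfolding log_def by (simp add: add_divide_distrib)
qed

lemma affine_ratio_concavity_gap:
  fixes a b r u t :: real
  assumes "1 + b * r \<noteq> 0" "1 + b * u \<noteq> 0" "1 + b * (t * r + (1 - t) * u) \<noteq> 0"
  shows "(1 + a * (t * r + (1 - t) * u)) / (1 + b * (t * r + (1 - t) * u))
           - (t * ((1 + a * r) / (1 + b * r)) + (1 - t) * ((1 + a * u) / (1 + b * u)))
         = t * (1 - t) * (a - b) * b * (r - u)\<^sup>2
           / ((1 + b * r) * (1 + b * u) * (1 + b * (t * r + (1 - t) * u)))"
proof -
  have common_denominator:
    "A / Z - (t * (B / X) + (1 - t) * (C / Y)) = (A * X * Y - (t * B * Y + (1 - t) * C * X) * Z) / (X * Y * Z)"
    if "X \<noteq> 0" "Y \<noteq> 0" "Z \<noteq> 0" for A B C X Y Z :: real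
    using that by (simp add: field_simps)
  have "(1 + a * (t * r + (1 - t) * u)) * (1 + b * r) * (1 + b * u)
          - (t * (1 + a * r) * (1 + b * u) + (1 - t) * (1 + a * u) * (1 + b * r))
            * (1 + b * (t * r + (1 - t) * u))
        = t * (1 - t) * (a - b) * b * (r - u)\<^sup>2"
    by (simp add: algebra_simps power2_eq_square)
  then show ?thesis
    using common_denominator[OF assms] by simp
qed

lemma affine_ratio_concave:
  fixes a b r u t :: real
  assumes "0 \<le> b" "b \<le> a" "0 \<le> r" "0 \<le> u" "0 \<le> t" "t \<le> 1"
  shows "t * ((1 + a * r) / (1 + b * r)) + (1 - t) * ((1 + a * u) / (1 + b * u))
         \<le> (1 + a * (t * r + (1 - t) * u)) / (1 + b * (t * r + (1 - t) * u))"
proof -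
  have "0 \<le> t * r + (1 - t) * u"
    using assms by simp
  then have denominators: "0 < 1 + b * r" "0 < 1 + b * u" "0 < 1 + b * (t * r + (1 - t) * u)"
    using assms by (simp_all add: add_pos_nonneg)
  have "0 \<le> t * (1 - t) * (a - b) * b * (r - u)\<^sup>2
             / ((1 + b * r) * (1 + b * u) * (1 + b * (t * r + (1 - t) * u)))"
    using assms denominators by simp
  then show ?thesis
    using affine_ratio_concavity_gap[of b r u t a] denominators by simp
qed

lemma affine_ratio_inj:
  fixes a b r u :: real
  assumes "a \<noteq> b" "1 + b * r \<noteq> 0" "1 + b * u \<noteq> 0"
    and "(1 + a * r) / (1 + b * r) = (1 + a * u) / (1 + b * u)"
  shows "r = u"
proof -
  have "(1 + a * r) * (1 + b * u) = (1 + a * u) * (1 + b * r)"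
    using assms(2-4) by (simp add: frac_eq_eq)
  then have "(a - b) * (r - u) = 0"
    by (simp add: algebra_simps)
  with assms(1) show ?thesis by simp
qed

definition log_affine_ratio :: "real \<Rightarrow> real \<Rightarrow> real \<Rightarrow> real" where
  "log_affine_ratio a b s = log 2 ((1 + a * s) / (1 + b * s))"

lemma log_affine_ratio_strict_concave:
  fixes a b r u t :: real
  assumes "0 \<le> b" "b < a" "0 \<le> r" "0 \<le> u" "r \<noteq> u" "0 < t" "t < 1"
  shows "t * log_affine_ratio a b r + (1 - t) * log_affine_ratio a b u
         < log_affine_ratio a b (t * r + (1 - t) * u)"
proof -
  define \<phi> where "\<phi> s = (1 + a * s) / (1 + b * s)" for s
  have denominator_pos: "0 < 1 + b * s" if "0 \<le> s" for s
    using that assms by (simp add: add_pos_nonneg)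
  have \<phi>_pos: "0 < \<phi> s" if "0 \<le> s" for s
    unfolding \<phi>_def using that assms denominator_pos by (simp add: add_pos_nonneg)
  have "\<phi> r \<noteq> \<phi> u"
    using affine_ratio_inj[of a b r u] denominator_pos[of r] denominator_pos[of u] assms
    unfolding \<phi>_def by auto
  then have "t * log 2 (\<phi> r) + (1 - t) * log 2 (\<phi> u) < log 2 (t * \<phi> r + (1 - t) * \<phi> u)"
    using log_strict_concave[of 2 "\<phi> r" "\<phi> u" t] \<phi>_pos assms by simp
  also have "\<dots> \<le> log 2 (\<phi> (t * r + (1 - t) * u))"
  proof -
    have "t * \<phi> r + (1 - t) * \<phi> u \<le> \<phi> (t * r + (1 - t) * u)"
      unfolding \<phi>_def using affine_ratio_concave[of b a r u t] assms by simp
    moreover have "0 < t * \<phi> r + (1 - t) * \<phi> u"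
      using \<phi>_pos assms by (simp add: add_pos_pos)
    ultimately show ?thesis by simp
  qed
  finally show ?thesis
    unfolding log_affine_ratio_def \<phi>_def .
qed

lemma log_affine_ratio_concave:
  fixes a b r u t :: real
  assumes "0 \<le> b" "b < a" "0 \<le> r" "0 \<le> u" "0 < t" "t < 1"
  shows "t * log_affine_ratio a b r + (1 - t) * log_affine_ratio a b u
         \<le> log_affine_ratio a b (t * r + (1 - t) * u)"
proof (cases "r = u")
  case True
  then show ?thesis by (simp add: algebra_simps)
next
  case False
  then show ?thesis
    using log_affine_ratio_strict_concave[OF assms(1-4) False assms(5,6)] by simp
qed

definition tail_sum :: "nat \<Rightarrow> (nat \<Rightarrow> real) \<Rightarrow> nat \<Rightarrow> real" where
  "tail_sum M p i = (\<Sum>j = i..M. p j)"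

lemma tail_sum_Suc_top [simp]: "tail_sum M p (Suc M) = 0"
  by (simp add: tail_sum_def)

lemma tail_sum_split: "i \<le> M \<Longrightarrow> tail_sum M p i = p i + tail_sum M p (Suc i)"
  by (simp add: tail_sum_def sum.atLeast_Suc_atMost)

lemma tail_sum_nonneg: "p \<in> nonneg_orthant M \<Longrightarrow> 0 \<le> tail_sum M p i"
  unfolding tail_sum_def nonneg_orthant_def by (auto intro!: sum_nonneg)

lemma tail_sum_convex_comb:
  "tail_sum M (\<lambda>j. t * x j + (1 - t) * y j) i = t * tail_sum M x i + (1 - t) * tail_sum M y i"
  by (simp add: tail_sum_def sum.distrib sum_distrib_left)

lemma tail_sum_inj:
  assumes "x \<in> nonneg_orthant M" "y \<in> nonneg_orthant M"
    and "\<And>i. i \<in> {1..M} \<Longrightarrow> tail_sum M x i = tail_sum M y i"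
  shows "x = y"
proof
  fix i
  show "x i = y i"
  proof (cases "i \<in> {1..M}")
    case True
    have "tail_sum M x (Suc i) = tail_sum M y (Suc i)"
      using assms(3)[of "Suc i"] True by (cases "i = M") auto
    then show ?thesis
      using tail_sum_split[of i M x] tail_sum_split[of i M y] assms(3)[OF True] True by simp
  next
    case False
    then show ?thesis
      using assms(1,2) unfolding nonneg_orthant_def by auto
  qed
qed

lemma nonneg_orthant_convex_comb:
  "x \<in> nonneg_orthant M \<Longrightarrow> y \<in> nonneg_orthant M \<Longrightarrow> 0 \<le> t \<Longrightarrow> t \<le> 1
    \<Longrightarrow> (\<lambda>i. t * x i + (1 - t) * y i) \<in> nonneg_orthant M"
  unfolding nonneg_orthant_def by auto

lemma sum_shift_pairs:
  fixes f :: "nat \<Rightarrow> nat \<Rightarrow> 'a::comm_monoid_add"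
  shows "(\<Sum>i = 1..n. f i (Suc i)) + f 0 1 = (\<Sum>i = 1..n. f (i - 1) i) + f n (Suc n)"
proof (induction n)
  case 0
  then show ?case by simp
next
  case (Suc n)
  have "(\<Sum>i = 1..Suc n. f i (Suc i)) + f 0 1
      = ((\<Sum>i = 1..n. f i (Suc i)) + f 0 1) + f (Suc n) (Suc (Suc n))"
    by (simp add: ac_simps)
  also have "\<dots> = ((\<Sum>i = 1..n. f (i - 1) i) + f n (Suc n)) + f (Suc n) (Suc (Suc n))"
    using Suc.IH by simp
  also have "\<dots> = (\<Sum>i = 1..Suc n. f (i - 1) i) + f (Suc n) (Suc (Suc n))"
    by (simp add: ac_simps)
  finally show ?case .
qed

lemma R_sum_tail_form:
  assumes gain_pos: "\<And>i. i \<in> {1..M} \<Longrightarrow> 0 < \<gamma> i"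
    and p: "p \<in> nonneg_orthant M"
  shows "R_sum M \<gamma> p = (\<Sum>i = 1..M. log_affine_ratio (\<gamma> i) ((\<gamma>(0 := 0)) (i - 1)) (tail_sum M p i))"
proof -
  define S where "S = tail_sum M p"
  define L where "L i s = log 2 (1 + (\<gamma>(0 := 0)) i * s)" for i s
  have L_pos: "0 < 1 + (\<gamma>(0 := 0)) i * S k" if "i \<le> M" for i k
    using gain_pos[of i] that tail_sum_nonneg[OF p, of k] unfolding S_def
    by (cases "i = 0") (simp_all add: add_pos_nonneg)
  have rate: "log 2 (1 + p i * \<gamma> i / ((\<Sum>j = i + 1..M. p j * \<gamma> i) + 1)) = L i (S i) - L i (S (Suc i))"
    if i: "i \<in> {1..M}" for i
  proof -
    have "(\<Sum>j = i + 1..M. p j * \<gamma> i) = \<gamma> i * S (Suc i)"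
      unfolding S_def tail_sum_def by (simp add: sum_distrib_left mult.commute)
    moreover have "S i = p i + S (Suc i)"
      unfolding S_def using i by (simp add: tail_sum_split)
    ultimately have "1 + p i * \<gamma> i / ((\<Sum>j = i + 1..M. p j * \<gamma> i) + 1)
        = (1 + \<gamma> i * S i) / (1 + \<gamma> i * S (Suc i))"
      using L_pos[of i "Suc i"] i by (simp add: field_simps)
    then show ?thesis
      unfolding L_def using L_pos[of i i] L_pos[of i "Suc i"] i by (simp add: log_divide)
  qed
  have "(\<Sum>i = 1..M. L i (S (Suc i))) = (\<Sum>i = 1..M. L (i - 1) (S i))"
    using sum_shift_pairs[of "\<lambda>i k. L i (S k)" M] by (simp add: L_def S_def)
  then have "R_sum M \<gamma> p = (\<Sum>i = 1..M. L i (S i) - L (i - 1) (S i))"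
    unfolding R_sum_def using rate by (simp add: sum_subtractf)
  also have "\<dots> = (\<Sum>i = 1..M. log_affine_ratio (\<gamma> i) ((\<gamma>(0 := 0)) (i - 1)) (S i))"
  proof (rule sum.cong)
    fix i
    assume i: "i \<in> {1..M}"
    have "(\<gamma>(0 := 0)) i = \<gamma> i" "0 < 1 + (\<gamma>(0 := 0)) (i - 1) * S i"
      using i L_pos[of "i - 1" i] by auto
    then show "L i (S i) - L (i - 1) (S i) = log_affine_ratio (\<gamma> i) ((\<gamma>(0 := 0)) (i - 1)) (S i)"
      using L_pos[of i i] i unfolding L_def log_affine_ratio_def by (simp add: log_divide)
  qed simp
  finally show ?thesis
    unfolding S_def .
qed

lemma increasing_gains_pos:
  fixes \<gamma> :: "nat \<Rightarrow> real"
  assumes "0 < \<gamma> 1" "\<And>i. 1 \<le> i \<Longrightarrow> i < M \<Longrightarrow> \<gamma> i < \<gamma> (i + 1)"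
    and "i \<in> {1..M}"
  shows "0 < \<gamma> i"
proof -
  have "1 \<le> i" "i \<le> M" using assms(3) by auto
  then show ?thesis
  proof (induction i rule: dec_induct)
    case base
    then show ?case using assms(1) by simp
  next
    case (step k)
    then show ?case using assms(2)[of k] by simp
  qed
qed

lemma sum_log_affine_ratio_tail_sum_strict_concave:
  assumes gains: "\<And>i. i \<in> {1..M} \<Longrightarrow> 0 \<le> b i \<and> b i < a i"
    and x: "x \<in> nonneg_orthant M" and y: "y \<in> nonneg_orthant M" and "x \<noteq> y"
    and t: "0 < t" "t < 1"
  shows "t * (\<Sum>i = 1..M. log_affine_ratio (a i) (b i) (tail_sum M x i))
           + (1 - t) * (\<Sum>i = 1..M. log_affine_ratio (a i) (b i) (tail_sum M y i))
         < (\<Sum>i = 1..M. log_affine_ratio (a i) (b i) (tail_sum M (\<lambda>j. t * x j + (1 - t) * y j) i))"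
proof -
  obtain k where k: "k \<in> {1..M}" "tail_sum M x k \<noteq> tail_sum M y k"
    using tail_sum_inj[OF x y] \<open>x \<noteq> y\<close> by blast
  have "(\<Sum>i = 1..M. t * log_affine_ratio (a i) (b i) (tail_sum M x i)
           + (1 - t) * log_affine_ratio (a i) (b i) (tail_sum M y i))
        < (\<Sum>i = 1..M. log_affine_ratio (a i) (b i) (tail_sum M (\<lambda>j. t * x j + (1 - t) * y j) i))"
    unfolding tail_sum_convex_comb
    using gains k t tail_sum_nonneg[OF x] tail_sum_nonneg[OF y]
    by (intro sum_strict_mono_ex1 ballI bexI[of _ k]
        log_affine_ratio_concave log_affine_ratio_strict_concave) auto
  then show ?thesis
    by (simp add: sum.distrib sum_distrib_left)
qed

theorem lemma1:
  fixes M :: nat and \<gamma> :: "nat \<Rightarrow> real"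
  assumes "M \<ge> 2"
    and "0 < \<gamma> 1"
    and "\<And>i. 1 \<le> i \<Longrightarrow> i < M \<Longrightarrow> \<gamma> i < \<gamma> (i + 1)"
  shows "strictly_concave_on (nonneg_orthant M) (R_sum M \<gamma>)"
proof -
  define \<beta> where "\<beta> i = (\<gamma>(0 := 0)) (i - 1)" for i
  have gain_pos: "\<And>i. i \<in> {1..M} \<Longrightarrow> 0 < \<gamma> i"
    using increasing_gains_pos[OF assms(2,3)] by blast
  have gains: "0 \<le> \<beta> i \<and> \<beta> i < \<gamma> i" if "i \<in> {1..M}" for i
    using that gain_pos[of "i - 1"] gain_pos[of i] assms(3)[of "i - 1"]
    by (cases "i = 1") (fastforce simp: \<beta>_def)+
  have R: "R_sum M \<gamma> p = (\<Sum>i = 1..M. log_affine_ratio (\<gamma> i) (\<beta> i) (tail_sum M p i))"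
    if "p \<in> nonneg_orthant M" for p
    using R_sum_tail_form[OF gain_pos that] by (simp add: \<beta>_def)
  show ?thesis
    unfolding strictly_concave_on_def
    using nonneg_orthant_convex_comb R
      sum_log_affine_ratio_tail_sum_strict_concave[of M \<beta> \<gamma>, OF gains]
    by (simp add: Ball_def)
qed

end
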